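(* Let $\mathcal C = (\mathcal X, \Sigma, \mathcal F)$ be a string constraint problem as described in the context. For every variable $x \in \mathcal X$ and every assignment $\rho$ to $\mathcal X$, the valid domain $V^\rho_x$ is a regular language over $\Sigma$.
   Context: A string constraint problem is a triple $\mathcal C = (\mathcal X, \Sigma, \mathcal F)$, where $\mathcal X = \{x_1,\ldots,x_n\}$ is a finite set of variables, $\Sigma$ is a finite alphabet, and $\mathcal F = \{f_1,\ldots,f_o\}$ is a finite set of formulas generated by the grammar $f ::= f \lor f \mid \lnot f \mid \mathrm{match}(x,\alpha)$, where $x \in \mathcal X$ and $\alpha$ is a regular expression over $\Sigma$. An assignment $\rho$ to $\mathcal X$ maps each $x_i$ to a string $\rho(x_i) \in \Sigma^*$. The atom $\mathrm{match}(x,\alpha)$ is true under $\rho$ iff $\rho(x) \in L(\alpha)$, the language of $\alpha$; $\lor$ and $\lnot$ have their usual boolean meaning. The solution set is $sol(\mathcal C) = \{\rho \mid \rho \models f \text{ for all } f \in \mathcal F\}$. For assignments $\rho,\rho'$ to $\mathcal X$, their concatenation is the assignment $\rho\rho'$ with $(\rho\rho')(x_j) = \rho(x_j)\rho'(x_j)$ for all $j$. The valid domain of $x_i$ relative to $\rho$ is $V^\rho_{x_i} = \{ w \in \Sigma^* \mid \exists \rho' : \rho'(x_i) = w \land \rho\rho' \in sol(\mathcal C)\}$, where $\rho'$ ranges over assignments to $\mathcal X$. *)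

theory Defs
  imports Main
begin

datatype 'a rexp =
    Zero
  | One
  | Atom 'a
  | Plus "'a rexp" "'a rexp"
  | Times "'a rexp" "'a rexp"
  | Star "'a rexp"

definition conc :: "'a list set \<Rightarrow> 'a list set \<Rightarrow> 'a list set" where
  "conc A B = {u @ v | u v. u \<in> A \<and> v \<in> B}"

inductive_set star :: "'a list set \<Rightarrow> 'a list set" for A where
  star_Nil: "[] \<in> star A"
| star_app: "u \<in> A \<Longrightarrow> v \<in> star A \<Longrightarrow> u @ v \<in> star A"

fun lang :: "'a rexp \<Rightarrow> 'a list set" where
  "lang Zero = {}"
| "lang One = {[]}"
| "lang (Atom a) = {[a]}"
| "lang (Plus r s) = lang r \<union> lang s"
| "lang (Times r s) = conc (lang r) (lang s)"
| "lang (Star r) = star (lang r)"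

definition regular_over :: "'a set \<Rightarrow> 'a list set \<Rightarrow> bool" where
  "regular_over Sig L \<longleftrightarrow> (\<exists>r. set_rexp r \<subseteq> Sig \<and> lang r = L)"

datatype ('v, 'a) sformula =
    Match 'v "'a rexp"
  | Or "('v, 'a) sformula" "('v, 'a) sformula"
  | Not "('v, 'a) sformula"

fun sat :: "('v \<Rightarrow> 'a list) \<Rightarrow> ('v, 'a) sformula \<Rightarrow> bool" where
  "sat \<rho> (Match x \<alpha>) \<longleftrightarrow> \<rho> x \<in> lang \<alpha>"
| "sat \<rho> (Or f g) \<longleftrightarrow> sat \<rho> f \<or> sat \<rho> g"
| "sat \<rho> (Not f) \<longleftrightarrow> \<not> sat \<rho> f"

fun fatoms :: "('v, 'a) sformula \<Rightarrow> 'a set" where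
  "fatoms (Match x \<alpha>) = set_rexp \<alpha>"
| "fatoms (Or f g) = fatoms f \<union> fatoms g"
| "fatoms (Not f) = fatoms f"

fun fvars :: "('v, 'a) sformula \<Rightarrow> 'v set" where
  "fvars (Match x \<alpha>) = {x}"
| "fvars (Or f g) = fvars f \<union> fvars g"
| "fvars (Not f) = fvars f"

definition scp :: "'v set \<Rightarrow> 'a set \<Rightarrow> ('v, 'a) sformula set \<Rightarrow> bool" where
  "scp X Sig F \<longleftrightarrow> finite X \<and> finite Sig \<and> finite F \<and>
     (\<forall>f\<in>F. fvars f \<subseteq> X \<and> fatoms f \<subseteq> Sig)"

text \<open>Assignments to X: maps from X to Sig^*. (Values outside X are irrelevant
  and fixed to [] to make the representation canonical.)\<close>
definition assignments :: "'v set \<Rightarrow> 'a set \<Rightarrow> ('v \<Rightarrow> 'a list) set" where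
  "assignments X Sig = {\<rho>. (\<forall>x\<in>X. set (\<rho> x) \<subseteq> Sig) \<and> (\<forall>x. x \<notin> X \<longrightarrow> \<rho> x = [])}"

definition sol :: "'v set \<Rightarrow> 'a set \<Rightarrow> ('v, 'a) sformula set \<Rightarrow> ('v \<Rightarrow> 'a list) set" where
  "sol X Sig F = {\<rho> \<in> assignments X Sig. \<forall>f\<in>F. sat \<rho> f}"

definition concat_assign :: "('v \<Rightarrow> 'a list) \<Rightarrow> ('v \<Rightarrow> 'a list) \<Rightarrow> ('v \<Rightarrow> 'a list)" where
  "concat_assign \<rho> \<rho>' = (\<lambda>x. \<rho> x @ \<rho>' x)"

definition valid_domain ::
  "'v set \<Rightarrow> 'a set \<Rightarrow> ('v, 'a) sformula set \<Rightarrow> ('v \<Rightarrow> 'a list) \<Rightarrow> 'v \<Rightarrow> 'a list set" where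
  "valid_domain X Sig F \<rho> x =
     {w. set w \<subseteq> Sig \<and> (\<exists>\<rho>' \<in> assignments X Sig. \<rho>' x = w \<and> concat_assign \<rho> \<rho>' \<in> sol X Sig F)}"

end

theory Submission
  imports Defs "HOL-Library.FuncSet" "HOL-Library.Sublist"
begin

(* Whether w lies in the valid domain of x depends only on w being a word over Sig and on
   which of the finitely many languages (rho x)^-1 L(alpha), for the regular expressions
   alpha matched against x in F, contain w: the other variables are untouched when only the
   value of x changes. Regular languages have finitely many left quotients, and a language
   determined in this way by finitely many such languages again has finitely many left
   quotients. Kleene's construction on its quotient automaton then yields a regular
   expression over Sig. *)

lemma concI: "u \<in> A \<Longrightarrow> v \<in> B \<Longrightarrow> u @ v \<in> conc A B"
  by (auto simp: conc_def)

lemma concE: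
  assumes "w \<in> conc A B"
  obtains u v where "w = u @ v" "u \<in> A" "v \<in> B"
  using assms by (auto simp: conc_def)

lemma star_append: "u \<in> star A \<Longrightarrow> v \<in> star A \<Longrightarrow> u @ v \<in> star A"
  by (induction rule: star.induct) (auto intro: star.intros)

lemma star_mono: "A \<subseteq> B \<Longrightarrow> star A \<subseteq> star B"
proof
  fix w assume "w \<in> star A" "A \<subseteq> B"
  then show "w \<in> star B"
    by (induction rule: star.induct) (auto intro: star.intros)
qed

lemma regular_over_Un:
  assumes "regular_over S A" "regular_over S B"
  shows "regular_over S (A \<union> B)"
proof -
  from assms obtain r s where "set_rexp r \<subseteq> S" "lang r = A" "set_rexp s \<subseteq> S" "lang s = B"
    unfolding regular_over_def by blast
  then show ?thesis
    unfolding regular_over_def by (intro exI[of _ "Plus r s"]) auto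
qed

lemma regular_over_conc:
  assumes "regular_over S A" "regular_over S B"
  shows "regular_over S (conc A B)"
proof -
  from assms obtain r s where "set_rexp r \<subseteq> S" "lang r = A" "set_rexp s \<subseteq> S" "lang s = B"
    unfolding regular_over_def by blast
  then show ?thesis
    unfolding regular_over_def by (intro exI[of _ "Times r s"]) auto
qed

lemma regular_over_star:
  assumes "regular_over S A"
  shows "regular_over S (star A)"
proof -
  from assms obtain r where "set_rexp r \<subseteq> S" "lang r = A"
    unfolding regular_over_def by blast
  then show ?thesis
    unfolding regular_over_def by (intro exI[of _ "Star r"]) auto
qed

lemma regular_over_singleton: "w \<in> lists S \<Longrightarrow> regular_over S {w}"
proof (induction w)
  case Nil
  show ?case unfolding regular_over_def by (intro exI[of _ One]) simp
next
  case (Cons a w)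
  then have "regular_over S (conc {[a]} {w})"
    by (intro regular_over_conc) (auto simp: regular_over_def intro: exI[of _ "Atom a"])
  then show ?case by (simp add: conc_def)
qed

lemma regular_over_finite: "finite W \<Longrightarrow> W \<subseteq> lists S \<Longrightarrow> regular_over S W"
proof (induction rule: finite_induct)
  case empty
  show ?case unfolding regular_over_def by (intro exI[of _ Zero]) simp
next
  case (insert w W)
  then show ?case
    using regular_over_Un[OF regular_over_singleton] by (metis insert_is_Un insert_subset)
qed

lemma regular_over_UN:
  "finite I \<Longrightarrow> (\<And>i. i \<in> I \<Longrightarrow> regular_over S (A i)) \<Longrightarrow> regular_over S (\<Union>i\<in>I. A i)"
proof (induction rule: finite_induct)
  case empty
  then show ?case using regular_over_finite[of "{}"] by simp
next
  case (insert i I)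
  then show ?case by (simp add: regular_over_Un)
qed

section \<open>Left quotients\<close>

definition Derivs :: "'a list \<Rightarrow> 'a list set \<Rightarrow> 'a list set" where
  "Derivs u L = {w. u @ w \<in> L}"

lemma Derivs_Nil [simp]: "Derivs [] L = L"
  by (simp add: Derivs_def)

lemma Derivs_append: "Derivs (u @ v) L = Derivs v (Derivs u L)"
  by (simp add: Derivs_def)

lemma Derivs_Un: "Derivs u (A \<union> B) = Derivs u A \<union> Derivs u B"
  by (auto simp: Derivs_def)

lemma Derivs_conc:
  "Derivs u (conc A B) = conc (Derivs u A) B \<union> (\<Union>v \<in> {v. \<exists>p\<in>A. u = p @ v}. Derivs v B)"
  by (auto simp: Derivs_def conc_def append_eq_append_conv2)

lemma star_split:
  "x \<in> star A \<Longrightarrow> x = u @ w \<Longrightarrow> u \<noteq> [] \<Longrightarrow>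
    \<exists>p v. p \<in> star A \<and> u = p @ v \<and> w \<in> conc (Derivs v A) (star A)"
proof (induction arbitrary: u rule: star.induct)
  case star_Nil
  then show ?case by simp
next
  case (star_app a y)
  consider (within) us where "a = u @ us" "w = us @ y"
    | (beyond) us where "u = a @ us" "y = us @ w" "us \<noteq> []"
    using star_app.prems(1) by (cases "length u \<le> length a") (auto simp: append_eq_append_conv2)
  then show ?case
  proof cases
    case within
    then have "w \<in> conc (Derivs u A) (star A)"
      using star_app.hyps(1,2) by (simp add: concI Derivs_def)
    then show ?thesis using star.star_Nil by fastforce
  next
    case beyond
    then obtain p v where "p \<in> star A" "us = p @ v" "w \<in> conc (Derivs v A) (star A)"
      using star_app.IH by blast
    moreover have "a @ p \<in> star A" using star_app.hyps(1) \<open>p \<in> star A\<close> by (rule star.star_app)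
    ultimately show ?thesis using beyond by fastforce
  qed
qed

lemma Derivs_star:
  assumes "u \<noteq> []"
  shows "Derivs u (star A) = (\<Union>v \<in> {v. \<exists>p\<in>star A. u = p @ v}. conc (Derivs v A) (star A))"
proof
  show "Derivs u (star A) \<subseteq> (\<Union>v \<in> {v. \<exists>p\<in>star A. u = p @ v}. conc (Derivs v A) (star A))"
    using star_split[OF _ refl assms] unfolding Derivs_def by blast
next
  show "(\<Union>v \<in> {v. \<exists>p\<in>star A. u = p @ v}. conc (Derivs v A) (star A)) \<subseteq> Derivs u (star A)"
  proof
    fix w assume "w \<in> (\<Union>v \<in> {v. \<exists>p\<in>star A. u = p @ v}. conc (Derivs v A) (star A))"
    then obtain p v r y where "p \<in> star A" "u = p @ v" and "w = r @ y" "v @ r \<in> A" "y \<in> star A"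
      unfolding conc_def Derivs_def by blast
    then have "p @ (v @ r) @ y \<in> star A"
      using \<open>p \<in> star A\<close> by (intro star_append star.star_app)
    then show "w \<in> Derivs u (star A)"
      unfolding Derivs_def using \<open>u = p @ v\<close> \<open>w = r @ y\<close> by simp
  qed
qed

definition finite_Derivs :: "'a list set \<Rightarrow> bool" where
  "finite_Derivs L \<longleftrightarrow> finite (range (\<lambda>u. Derivs u L))"

lemma finite_Derivs_finite: "finite L \<Longrightarrow> finite_Derivs L"
proof -
  assume "finite L"
  have "Derivs u L \<subseteq> (\<Union>w\<in>L. set (suffixes w))" for u
    by (auto simp: Derivs_def suffix_def)
  then have "range (\<lambda>u. Derivs u L) \<subseteq> Pow (\<Union>w\<in>L. set (suffixes w))"
    by blast
  then show ?thesis
    unfolding finite_Derivs_def by (rule finite_subset) (simp add: \<open>finite L\<close>)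
qed

lemma finite_Derivs_Un:
  assumes "finite_Derivs A" "finite_Derivs B"
  shows "finite_Derivs (A \<union> B)"
proof -
  have "range (\<lambda>u. Derivs u (A \<union> B)) \<subseteq>
      (\<lambda>(a, b). a \<union> b) ` (range (\<lambda>u. Derivs u A) \<times> range (\<lambda>u. Derivs u B))"
    by (auto simp: Derivs_Un)
  then show ?thesis
    unfolding finite_Derivs_def by (rule finite_subset) (use assms in \<open>simp add: finite_Derivs_def\<close>)
qed

lemma finite_Derivs_conc:
  assumes "finite_Derivs A" "finite_Derivs B"
  shows "finite_Derivs (conc A B)"
proof -
  have "range (\<lambda>u. Derivs u (conc A B)) \<subseteq>
      (\<lambda>(a, D). conc a B \<union> \<Union>D) ` (range (\<lambda>u. Derivs u A) \<times> Pow (range (\<lambda>u. Derivs u B)))"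
    by (auto simp: Derivs_conc)
  then show ?thesis
    unfolding finite_Derivs_def by (rule finite_subset) (use assms in \<open>simp add: finite_Derivs_def\<close>)
qed

lemma finite_Derivs_star:
  assumes "finite_Derivs A"
  shows "finite_Derivs (star A)"
proof -
  have "range (\<lambda>u. Derivs u (star A)) \<subseteq>
      insert (star A) ((\<lambda>D. \<Union>a\<in>D. conc a (star A)) ` Pow (range (\<lambda>u. Derivs u A)))"
  proof (rule image_subsetI)
    fix u :: "'a list"
    show "Derivs u (star A) \<in>
        insert (star A) ((\<lambda>D. \<Union>a\<in>D. conc a (star A)) ` Pow (range (\<lambda>u. Derivs u A)))"
    proof (cases "u = []")
      case False
      then have "Derivs u (star A) =
          (\<Union>a \<in> (\<lambda>v. Derivs v A) ` {v. \<exists>p\<in>star A. u = p @ v}. conc a (star A))"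
        by (simp add: Derivs_star)
      then show ?thesis by blast
    qed simp
  qed
  then show ?thesis
    unfolding finite_Derivs_def by (rule finite_subset) (use assms in \<open>simp add: finite_Derivs_def\<close>)
qed

lemma finite_Derivs_lang: "finite_Derivs (lang r)"
  by (induction r) (simp_all add: finite_Derivs_finite finite_Derivs_Un finite_Derivs_conc finite_Derivs_star)

lemma finite_Derivs_Derivs: "finite_Derivs L \<Longrightarrow> finite_Derivs (Derivs u L)"
  unfolding finite_Derivs_def Derivs_append[symmetric] by (rule finite_subset[rotated]) auto

lemma finite_Derivs_profile:
  assumes "finite I" "\<And>i. i \<in> I \<Longrightarrow> finite_Derivs (D i)"
  shows "finite_Derivs {w \<in> lists Sig. P {i \<in> I. w \<in> D i}}"
proof -
  txt \<open>The quotient by \<^term>\<open>u\<close> is determined by whether \<^term>\<open>u \<in> lists Sig\<close> and by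
    the quotients of the \<^term>\<open>D i\<close> by \<^term>\<open>u\<close>.\<close>
  define \<Phi> where "\<Phi> = (\<lambda>(b, E). {w \<in> lists Sig. b \<and> P {i \<in> I. w \<in> E i}})"
  have "Derivs u {w \<in> lists Sig. P {i \<in> I. w \<in> D i}} =
      \<Phi> (u \<in> lists Sig, restrict (\<lambda>i. Derivs u (D i)) I)" for u
  proof -
    have "{i \<in> I. w \<in> restrict (\<lambda>i. Derivs u (D i)) I i} = {i \<in> I. u @ w \<in> D i}" for w
      by (auto simp: Derivs_def)
    then show ?thesis by (auto simp: \<Phi>_def Derivs_def)
  qed
  then have "range (\<lambda>u. Derivs u {w \<in> lists Sig. P {i \<in> I. w \<in> D i}}) \<subseteq>
      \<Phi> ` (UNIV \<times> (\<Pi>\<^sub>E i\<in>I. range (\<lambda>u. Derivs u (D i))))"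
    by auto
  moreover have "finite (\<Pi>\<^sub>E i\<in>I. range (\<lambda>u. Derivs u (D i)))"
    using assms by (simp add: finite_PiE finite_Derivs_def)
  ultimately show ?thesis
    unfolding finite_Derivs_def by (simp add: finite_subset)
qed

section \<open>Kleene's construction on the quotient automaton\<close>

text \<open>The states are the quotients \<^term>\<open>Derivs u L\<close>, reading \<^term>\<open>w\<close> moves from
  \<^term>\<open>q\<close> to \<^term>\<open>Derivs w q\<close>, and \<^term>\<open>paths Sig S q q'\<close> collects the words leading from
  \<^term>\<open>q\<close> to \<^term>\<open>q'\<close> through intermediate states in \<^term>\<open>S\<close> only: the languages
  R^k_ij of the McNaughton-Yamada proof.\<close>

definition paths :: "'a set \<Rightarrow> 'a list set set \<Rightarrow> 'a list set \<Rightarrow> 'a list set \<Rightarrow> 'a list set" where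
  "paths Sig S q q' = {w \<in> lists Sig. Derivs w q = q' \<and>
     (\<forall>n \<in> {0<..<length w}. Derivs (take n w) q \<in> S)}"

lemma paths_mono: "S \<subseteq> S' \<Longrightarrow> paths Sig S q q' \<subseteq> paths Sig S' q q'"
  unfolding paths_def by blast

lemma paths_append:
  assumes "s \<in> S" "u \<in> paths Sig S q s" "v \<in> paths Sig S s q'"
  shows "u @ v \<in> paths Sig S q q'"
proof -
  have "Derivs (take n (u @ v)) q \<in> S" if n: "n \<in> {0<..<length (u @ v)}" for n
  proof -
    consider "n < length u" | "n = length u" | "length u < n" by linarith
    then show ?thesis
    proof cases
      case 1
      then show ?thesis using n assms(2) by (simp add: paths_def)
    next
      case 2
      then show ?thesis using assms(1,2) by (simp add: paths_def)
    next
      case 3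
      then have "Derivs (take n (u @ v)) q = Derivs (take (n - length u) v) s"
        using assms(2) by (simp add: paths_def Derivs_append)
      then show ?thesis using 3 n assms(3) by (simp add: paths_def)
    qed
  qed
  then show ?thesis using assms(2,3) by (simp add: paths_def Derivs_append)
qed

lemma star_paths: "s \<in> S \<Longrightarrow> star (paths Sig S s s) \<subseteq> paths Sig S s s"
proof
  fix w assume "w \<in> star (paths Sig S s s)" "s \<in> S"
  then show "w \<in> paths Sig S s s"
  proof (induction rule: star.induct)
    case star_Nil
    then show ?case by (simp add: paths_def)
  next
    case (star_app u v)
    then show ?case by (simp add: paths_append)
  qed
qed

lemma paths_insert_split:
  assumes "w \<in> paths Sig (insert s S) q q'" "w \<notin> paths Sig S q q'"
  obtains u v where "w = u @ v" "u \<noteq> []" "u \<in> paths Sig S q s"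
    "v \<in> paths Sig (insert s S) s q'"
proof -
  let ?visit = "\<lambda>n. n \<in> {0<..<length w} \<and> Derivs (take n w) q = s"
  have w: "w \<in> lists Sig" "Derivs w q = q'"
      "\<And>m. m \<in> {0<..<length w} \<Longrightarrow> Derivs (take m w) q \<in> insert s S"
    using assms(1) by (auto simp: paths_def)
  have "\<exists>n. ?visit n" using w assms(2) unfolding paths_def by blast
  define n where "n = (LEAST n. ?visit n)"
  have n: "?visit n" unfolding n_def using \<open>\<exists>n. ?visit n\<close> by (rule LeastI_ex)
  have first: "\<not> ?visit m" if "m < n" for m
    using that unfolding n_def by (rule not_less_Least)
  define u v where "u = take n w" and "v = drop n w"
  have "u \<in> paths Sig S q s"
  proof -
    have "Derivs (take m u) q \<in> S" if "m \<in> {0<..<length u}" for m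
      using that w(3)[of m] first[of m] n by (auto simp: u_def)
    then show ?thesis using w(1) n by (auto simp: paths_def u_def dest: in_set_takeD)
  qed
  moreover have "v \<in> paths Sig (insert s S) s q'"
  proof -
    have s: "s = Derivs u q" using n by (simp add: u_def)
    have "Derivs v s = q'" using w(2) by (simp add: s u_def v_def flip: Derivs_append)
    moreover have "Derivs (take m v) s \<in> insert s S" if "m \<in> {0<..<length v}" for m
    proof -
      have "Derivs (take m v) s = Derivs (take (n + m) w) q"
        by (simp add: s u_def v_def take_add flip: Derivs_append)
      moreover have "n + m \<in> {0<..<length w}" using that by (auto simp: v_def)
      ultimately show ?thesis using w(3) by simp
    qed
    ultimately show ?thesis using w(1) by (auto simp: paths_def v_def dest: in_set_dropD)
  qed
  moreover have "w = u @ v" "u \<noteq> []" using n by (auto simp: u_def v_def)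
  ultimately show thesis using that by blast
qed

lemma paths_insert_from_loop:
  "v \<in> paths Sig (insert s S) s q' \<Longrightarrow> v \<in> conc (star (paths Sig S s s)) (paths Sig S s q')"
proof (induction "length v" arbitrary: v rule: less_induct)
  case less
  show ?case
  proof (cases "v \<in> paths Sig S s q'")
    case True
    then show ?thesis using concI[OF star.star_Nil] by fastforce
  next
    case False
    with less.prems obtain a b where v: "v = a @ b" "a \<noteq> []" "a \<in> paths Sig S s s"
      and b: "b \<in> paths Sig (insert s S) s q'"
      by (rule paths_insert_split)
    then have "b \<in> conc (star (paths Sig S s s)) (paths Sig S s q')"
      using less.hyps by simp
    then obtain c d where "b = c @ d" "c \<in> star (paths Sig S s s)" "d \<in> paths Sig S s q'"
      by (rule concE)
    moreover have "a @ c \<in> star (paths Sig S s s)"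
      using v(3) \<open>c \<in> star (paths Sig S s s)\<close> by (rule star.star_app)
    ultimately show ?thesis
      using v(1) concI[of "a @ c"] by simp
  qed
qed

lemma paths_insert:
  "paths Sig (insert s S) q q' =
     paths Sig S q q' \<union> conc (paths Sig S q s) (conc (star (paths Sig S s s)) (paths Sig S s q'))"
  (is "_ = ?R")
proof
  show "paths Sig (insert s S) q q' \<subseteq> ?R"
  proof
    fix w assume w: "w \<in> paths Sig (insert s S) q q'"
    show "w \<in> ?R"
    proof (cases "w \<in> paths Sig S q q'")
      case False
      with w obtain u v where "w = u @ v" "u \<in> paths Sig S q s" "v \<in> paths Sig (insert s S) s q'"
        by (rule paths_insert_split)
      then show ?thesis by (simp add: concI paths_insert_from_loop)
    qed simp
  qed
next
  have sub: "paths Sig S p p' \<subseteq> paths Sig (insert s S) p p'" for p p'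
    by (rule paths_mono) blast
  have loops: "star (paths Sig S s s) \<subseteq> paths Sig (insert s S) s s"
    using star_mono[OF sub] star_paths[of s "insert s S"] by blast
  show "?R \<subseteq> paths Sig (insert s S) q q'"
  proof
    fix w assume "w \<in> ?R"
    then show "w \<in> paths Sig (insert s S) q q'"
    proof
      assume "w \<in> conc (paths Sig S q s) (conc (star (paths Sig S s s)) (paths Sig S s q'))"
      then obtain a bc where "w = a @ bc" "a \<in> paths Sig S q s"
          "bc \<in> conc (star (paths Sig S s s)) (paths Sig S s q')"
        by (rule concE)
      from this(3) obtain b c where "bc = b @ c" "b \<in> star (paths Sig S s s)" "c \<in> paths Sig S s q'"
        by (rule concE)
      have "bc \<in> paths Sig (insert s S) s q'"
        using \<open>bc = b @ c\<close> paths_append[OF insertI1, of b] loops sub \<open>b \<in> _\<close> \<open>c \<in> _\<close> by blast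
      then show ?thesis
        using \<open>w = a @ bc\<close> paths_append[OF insertI1, of a] sub \<open>a \<in> _\<close> by blast
    qed (use sub in blast)
  qed
qed

lemma paths_empty_subset: "paths Sig {} q q' \<subseteq> {w. set w \<subseteq> Sig \<and> length w \<le> 1}"
proof
  fix w assume w: "w \<in> paths Sig {} q q'"
  have "\<not> 1 < length w"
  proof
    assume "1 < length w"
    then show False using w by (auto simp: paths_def)
  qed
  then show "w \<in> {w. set w \<subseteq> Sig \<and> length w \<le> 1}" using w by (auto simp: paths_def)
qed

lemma regular_over_paths:
  assumes "finite Sig" "finite S"
  shows "regular_over Sig (paths Sig S q q')"
  using assms(2)
proof (induction arbitrary: q q' rule: finite_induct)
  case empty
  have "finite (paths Sig {} q q')"
    using finite_lists_length_le[OF assms(1), of 1] paths_empty_subset by (rule finite_subset[rotated])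
  then show ?case
    by (rule regular_over_finite) (auto simp: paths_def)
next
  case (insert s S)
  then show ?case by (simp add: paths_insert regular_over_Un regular_over_conc regular_over_star)
qed

theorem regular_over_if_finite_Derivs:
  assumes "finite Sig" "L \<subseteq> lists Sig" "finite_Derivs L"
  shows "regular_over Sig L"
proof -
  let ?Q = "range (\<lambda>u. Derivs u L)"
  have "L = (\<Union>q \<in> {q \<in> ?Q. [] \<in> q}. paths Sig ?Q L q)"
  proof
    show "L \<subseteq> (\<Union>q \<in> {q \<in> ?Q. [] \<in> q}. paths Sig ?Q L q)"
    proof
      fix w assume "w \<in> L"
      then have "w \<in> paths Sig ?Q L (Derivs w L)" "[] \<in> Derivs w L"
        using assms(2) by (auto simp: paths_def Derivs_def)
      then show "w \<in> (\<Union>q \<in> {q \<in> ?Q. [] \<in> q}. paths Sig ?Q L q)" by blast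
    qed
  next
    show "(\<Union>q \<in> {q \<in> ?Q. [] \<in> q}. paths Sig ?Q L q) \<subseteq> L"
    proof
      fix w assume "w \<in> (\<Union>q \<in> {q \<in> ?Q. [] \<in> q}. paths Sig ?Q L q)"
      then have "[] \<in> Derivs w L" by (auto simp: paths_def)
      then show "w \<in> L" by (simp add: Derivs_def)
    qed
  qed
  moreover have "regular_over Sig (\<Union>q \<in> {q \<in> ?Q. [] \<in> q}. paths Sig ?Q L q)"
    using assms(1,3) unfolding finite_Derivs_def by (intro regular_over_UN regular_over_paths) auto
  ultimately show ?thesis by simp
qed

section \<open>Valid domains\<close>

fun match_atoms :: "('v, 'a) sformula \<Rightarrow> ('v \<times> 'a rexp) set" where
  "match_atoms (Match x \<alpha>) = {(x, \<alpha>)}"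
| "match_atoms (Or f g) = match_atoms f \<union> match_atoms g"
| "match_atoms (Not f) = match_atoms f"

lemma finite_match_atoms: "finite (match_atoms f)"
  by (induction f) auto

lemma sat_cong:
  assumes "\<And>y \<alpha>. (y, \<alpha>) \<in> match_atoms f \<Longrightarrow> \<sigma> y \<in> lang \<alpha> \<longleftrightarrow> \<sigma>' y \<in> lang \<alpha>"
  shows "sat \<sigma> f \<longleftrightarrow> sat \<sigma>' f"
  using assms by (induction f) auto

definition match_profile ::
  "('v, 'a) sformula set \<Rightarrow> ('v \<Rightarrow> 'a list) \<Rightarrow> 'v \<Rightarrow> 'a list \<Rightarrow> 'a rexp set" where
  "match_profile F \<rho> x w = {\<alpha>. \<exists>f\<in>F. (x, \<alpha>) \<in> match_atoms f \<and> \<rho> x @ w \<in> lang \<alpha>}"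

lemma valid_domain_closed:
  assumes "x \<in> X" "\<rho> \<in> assignments X Sig" "w \<in> valid_domain X Sig F \<rho> x" "w' \<in> lists Sig"
    and "match_profile F \<rho> x w' = match_profile F \<rho> x w"
  shows "w' \<in> valid_domain X Sig F \<rho> x"
proof -
  obtain \<rho>' where \<rho>': "\<rho>' \<in> assignments X Sig" "\<rho>' x = w" "concat_assign \<rho> \<rho>' \<in> sol X Sig F"
    using assms(3) unfolding valid_domain_def by blast
  let ?\<rho>'' = "\<rho>'(x := w')"
  have same_matches: "\<rho> x @ w' \<in> lang \<alpha> \<longleftrightarrow> \<rho> x @ w \<in> lang \<alpha>"
    if "f \<in> F" "(x, \<alpha>) \<in> match_atoms f" for f \<alpha>
    using assms(5) that unfolding match_profile_def by blast
  have "?\<rho>'' \<in> assignments X Sig"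
    using \<rho>'(1) assms(1,4) by (auto simp: assignments_def)
  moreover have "concat_assign \<rho> ?\<rho>'' \<in> assignments X Sig"
    using calculation assms(2) by (auto simp: assignments_def concat_assign_def)
  moreover have "sat (concat_assign \<rho> ?\<rho>'') f" if "f \<in> F" for f
  proof -
    have "sat (concat_assign \<rho> \<rho>') f" using \<rho>'(3) that by (simp add: sol_def)
    then show ?thesis
      using same_matches[OF that] \<rho>'(2) by (subst sat_cong) (auto simp: concat_assign_def)
  qed
  ultimately show ?thesis
    using assms(4) unfolding valid_domain_def sol_def
    by (intro CollectI conjI bexI[of _ ?\<rho>'']) (auto simp: in_lists_conv_set)
qed

lemma valid_domain_saturated:
  assumes "x \<in> X" "\<rho> \<in> assignments X Sig"
  shows "valid_domain X Sig F \<rho> x =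
    {w \<in> lists Sig. match_profile F \<rho> x w \<in> match_profile F \<rho> x ` valid_domain X Sig F \<rho> x}"
proof
  have "valid_domain X Sig F \<rho> x \<subseteq> lists Sig"
    by (auto simp: valid_domain_def)
  then show "valid_domain X Sig F \<rho> x \<subseteq>
      {w \<in> lists Sig. match_profile F \<rho> x w \<in> match_profile F \<rho> x ` valid_domain X Sig F \<rho> x}"
    by blast
qed (use valid_domain_closed[OF assms] in blast)

theorem theorem1:
  fixes X :: "'v set" and Sig :: "'a set" and F :: "('v, 'a) sformula set"
  assumes "scp X Sig F"
    and "x \<in> X"
    and "\<rho> \<in> assignments X Sig"
  shows "regular_over Sig (valid_domain X Sig F \<rho> x)"
proof -
  let ?V = "valid_domain X Sig F \<rho> x"
  define I where "I = (\<Union>f\<in>F. match_atoms f) `` {x}"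
  have Sig: "finite Sig" and "finite I"
    using assms(1) by (auto simp: scp_def I_def finite_match_atoms)
  have profile: "match_profile F \<rho> x w = {\<alpha> \<in> I. w \<in> Derivs (\<rho> x) (lang \<alpha>)}" for w
    by (auto simp: match_profile_def I_def Derivs_def)
  have "finite_Derivs {w \<in> lists Sig. {\<alpha> \<in> I. w \<in> Derivs (\<rho> x) (lang \<alpha>)} \<in> match_profile F \<rho> x ` ?V}"
    using \<open>finite I\<close> by (rule finite_Derivs_profile) (simp add: finite_Derivs_Derivs finite_Derivs_lang)
  then have "finite_Derivs ?V"
    by (subst valid_domain_saturated[OF assms(2,3)]) (simp only: profile)
  then show ?thesis
    by (rule regular_over_if_finite_Derivs[OF Sig, rotated]) (auto simp: valid_domain_def)
qed

end
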